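(* Let $n\ge2$, let $x_1,\dots,x_n$ be commuting indeterminates over $\mathbb{K}=\mathbb{C}(q)$, and for $k\ge0$ let $\mathrm{Ch}_{n,k}=\sum_{i=1}^n x_i^k\prod_{j\ne i,\,1\le j\le n}\frac{qx_i-q^{-1}x_j}{x_i-x_j}$. For $k\ge1$ and $1\le i\le \min(k,n)$ let $\lambda^i_k=(k-i+1)\epsilon_1+\epsilon_2+\cdots+\epsilon_i$ (the partition $(k-i+1,1^{i-1})$), and let $\mathrm{Ch}\,L_{\lambda^i_k}$ denote the character of the irreducible $\mathfrak{gl}_n$-module of highest weight $\lambda^i_k$, written in the variables $x_j=e^{\epsilon_j}$ (i.e. the Schur polynomial $s_{(k-i+1,1^{i-1})}(x_1,\dots,x_n)$); set $\mathrm{Ch}\,L_{\lambda^i_k}=0$ if $i>k$. Then for every $k=1,2,\dots$, $\sum_{i=1}^n(-1)^{i-1}q^{n-2i+1}\,\mathrm{Ch}\,L_{\lambda^i_k}=\mathrm{Ch}_{n,k}$.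
   Context: By the Weyl character formula, $\mathrm{Ch}\,L_{\lambda}=\frac{\sum_{w\in S_n}\mathrm{sign}(w)e^{w(\lambda+\tilde\rho)}}{\prod_{i<j}(e^{\epsilon_i}-e^{\epsilon_j})}$ with $\tilde\rho=\sum_{i=1}^n(n-i)\epsilon_i$, where the symmetric group $S_n$ permutes the $\epsilon_i$ and $e^{\sum a_i\epsilon_i}=\prod x_i^{a_i}$. *)

theory Defs
  imports Complex_Main "HOL-Combinatorics.Permutations"
begin

text \<open>Variables x_1..x_n are represented 0-based as x 0, ..., x (n-1).
  A weight lambda = sum a_j eps_j is a function lam :: nat => nat (index j < n).\<close>

text \<open>Weyl character formula: numerator alternant sum over w in S_n of
  sign(w) e^(w(lambda + rho)), with rho = sum (n-i) eps_i, divided by the Vandermonde.\<close>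
definition weyl_char :: "nat \<Rightarrow> (nat \<Rightarrow> nat) \<Rightarrow> (nat \<Rightarrow> complex) \<Rightarrow> complex" where
  "weyl_char n lam x =
     (\<Sum>w | w permutes {..<n}. of_int (sign w) * (\<Prod>j<n. x (w j) ^ (lam j + (n - 1 - j))))
     / (\<Prod>i<n. \<Prod>j\<in>{i<..<n}. (x i - x j))"

text \<open>lambda^i_k = (k-i+1) eps_1 + eps_2 + ... + eps_i (i 1-based; here index j 0-based).\<close>
definition hook_weight :: "nat \<Rightarrow> nat \<Rightarrow> nat \<Rightarrow> nat" where
  "hook_weight k i j = (if j = 0 then k - i + 1 else if j < i then 1 else 0)"

definition ChL_hook :: "nat \<Rightarrow> nat \<Rightarrow> nat \<Rightarrow> (nat \<Rightarrow> complex) \<Rightarrow> complex" where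
  "ChL_hook n k i x = (if i > k then 0 else weyl_char n (hook_weight k i) x)"

definition Ch_nk :: "nat \<Rightarrow> nat \<Rightarrow> complex \<Rightarrow> (nat \<Rightarrow> complex) \<Rightarrow> complex" where
  "Ch_nk n k q x = (\<Sum>i<n. x i ^ k *
      (\<Prod>j\<in>{..<n} - {i}. (q * x i - inverse q * x j) / (x i - x j)))"

end

theory Submission
  imports Defs "Jordan_Normal_Form.Determinant"
begin

text \<open>By the Weyl character formula, \<open>Ch L\<close> of the hook \<open>(k - m, 1, \<dots>, 1)\<close> (with \<open>m\<close> ones) is
  the alternant with row exponents \<open>k + n - 1 - m\<close> followed by \<open>n - 1, \<dots>, 0\<close> without \<open>n - 1 - m\<close>,
  divided by the Vandermonde determinant. Expanding along the first row, each minor is an alternant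
  of the other \<open>n - 1\<close> variables with a single exponent gap, i.e. \<open>e_m\<close> times their Vandermonde.
  Hence \<open>Ch L = \<Sum>_a x_a^(k+n-1-m) e_m(x without x_a) / \<Prod>_(j\<noteq>a) (x_a - x_j)\<close>; for \<open>m \<ge> k\<close> the
  same sum vanishes because the first row of the alternant repeats a later one. Weighting with
  \<open>(-1)^m q^(n-1-2m)\<close> and summing over \<open>m\<close> produces, for each \<open>a\<close>, the expansion of
  \<open>\<Prod>_(j\<noteq>a) (q x_a - q\<^sup>-\<^sup>1 x_j)\<close> in elementary symmetric functions, and the result is \<open>Ch_(n,k)\<close>.

  The gap alternants are identified by expanding the Vandermonde determinant of \<open>x_0, \<dots>, x_(n-1), y\<close>
  along the column of \<open>y\<close> and comparing with \<open>\<Prod>_i (x_i - y)\<close>: the difference is a polynomial in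
  \<open>y\<close> of degree below \<open>n\<close> (the leading coefficients agree by induction on \<open>n\<close>) that vanishes at the
  \<open>n\<close> distinct points \<open>x_i\<close>.\<close>

definition esym :: "nat \<Rightarrow> 'b set \<Rightarrow> ('b \<Rightarrow> 'a::comm_semiring_1) \<Rightarrow> 'a" where
  "esym m S w = (\<Sum>B | B \<subseteq> S \<and> card B = m. \<Prod>j\<in>B. w j)"

lemma esym_0: "finite S \<Longrightarrow> esym 0 S w = 1"
proof -
  assume "finite S"
  then have "{B. B \<subseteq> S \<and> card B = 0} = {{}}"
    by (auto dest: finite_subset)
  then show ?thesis unfolding esym_def by simp
qed

lemma esym_cong: "(\<And>j. j \<in> S \<Longrightarrow> w j = v j) \<Longrightarrow> esym m S w = esym m S v"
  unfolding esym_def by (intro sum.cong refl prod.cong) auto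

lemma esym_mult_const: "esym m S (\<lambda>j. c * w j) = c ^ m * esym m S w"
  unfolding esym_def sum_distrib_left
  by (intro sum.cong refl) (auto simp: prod.distrib)

lemma prod_add_const_esym:
  fixes w :: "'b \<Rightarrow> 'a::comm_semiring_1"
  assumes "finite S"
  shows "(\<Prod>i\<in>S. u + w i) = (\<Sum>m\<le>card S. esym m S w * u ^ (card S - m))"
proof -
  have "(\<Prod>i\<in>S. w i + u) = (\<Sum>X\<in>Pow S. (\<Prod>i\<in>X. w i) * (\<Prod>i\<in>S - X. u))"
    by (rule prod_add[OF assms])
  also have "\<dots> = (\<Sum>X\<in>Pow S. (\<Prod>i\<in>X. w i) * u ^ (card S - card X))"
    using assms by (intro sum.cong refl) (auto simp: card_Diff_subset finite_subset)
  also have "\<dots> = (\<Sum>m\<le>card S. \<Sum>X | X \<in> Pow S \<and> card X = m. (\<Prod>i\<in>X. w i) * u ^ (card S - card X))"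
    using assms by (intro sum.group[symmetric]) (auto intro: card_mono)
  also have "\<dots> = (\<Sum>m\<le>card S. esym m S w * u ^ (card S - m))"
    unfolding esym_def sum_distrib_right by (intro sum.cong refl) auto
  finally show ?thesis by (simp add: add.commute)
qed

lemma power_int_diff_double:
  fixes q :: "'a::field"
  assumes "q \<noteq> 0" "m \<le> N"
  shows "q powi (int N - 2 * int m) = q ^ (N - m) * inverse q ^ m"
proof -
  have "int N - 2 * int m = int (N - m) - int m"
    using assms(2) by (simp add: of_nat_diff)
  then have "q powi (int N - 2 * int m) = q powi int (N - m) / q powi int m"
    using power_int_diff[of q "int (N - m)" "int m"] assms(1) by presburger
  then show ?thesis
    by (simp only: power_int_of_nat divide_inverse power_inverse)
qed

lemma prod_q_diff_eq_sum_esym: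
  fixes q u :: "'a::field"
  assumes "finite S" "q \<noteq> 0"
  shows "(\<Prod>j\<in>S. q * u - inverse q * w j) =
    (\<Sum>m\<le>card S. (-1) ^ m * q powi (int (card S) - 2 * int m) * u ^ (card S - m) * esym m S w)"
proof -
  have "(\<Prod>j\<in>S. q * u - inverse q * w j) = (\<Prod>j\<in>S. q * u + (- inverse q) * w j)"
    by simp
  also have "\<dots> = (\<Sum>m\<le>card S. (- inverse q) ^ m * esym m S w * (q * u) ^ (card S - m))"
    unfolding prod_add_const_esym[OF assms(1)] esym_mult_const ..
  also have "\<dots> = (\<Sum>m\<le>card S. (-1) ^ m * q powi (int (card S) - 2 * int m) * u ^ (card S - m) * esym m S w)"
  proof (intro sum.cong refl)
    fix m assume "m \<in> {..card S}"
    then have "q powi (int (card S) - 2 * int m) = q ^ (card S - m) * inverse q ^ m"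
      using assms(2) by (intro power_int_diff_double) auto
    then show "(- inverse q) ^ m * esym m S w * (q * u) ^ (card S - m) =
      (-1) ^ m * q powi (int (card S) - 2 * int m) * u ^ (card S - m) * esym m S w"
      by (simp only: power_minus[of "inverse q"] power_mult_distrib mult_ac)
  qed
  finally show ?thesis .
qed

lemma prod_insert_index:
  "a \<le> n \<Longrightarrow> (\<Prod>i<n. f (insert_index a i)) = (\<Prod>j\<in>{..<Suc n} - {a}. f j)"
proof -
  assume "a \<le> n"
  then have "insert_index a ` {..<n} = {..<Suc n} - {a}"
    using insert_index_image[of a n] by (simp add: atLeast0LessThan)
  then show ?thesis
    using prod.reindex[OF insert_index_inj_on[of a "{..<n}"], of f] by simp
qed

lemma prod_q_diff_delete_eq_sum_esym:
  fixes q :: "'a::field"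
  assumes "q \<noteq> 0" "a \<le> n"
  shows "(\<Prod>j\<in>{..<Suc n} - {a}. q * x a - inverse q * x j) =
    (\<Sum>m\<le>n. (-1) ^ m * q powi (int n - 2 * int m) * x a ^ (n - m)
      * esym m {..<n} (\<lambda>b. x (insert_index a b)))"
  using prod_insert_index[OF assms(2), of "\<lambda>j. q * x a - inverse q * x j"]
    prod_q_diff_eq_sum_esym[of "{..<n}" q "x a" "\<lambda>b. x (insert_index a b)"] assms(1)
  by simp

definition vandermonde :: "nat \<Rightarrow> (nat \<Rightarrow> 'a::comm_ring_1) \<Rightarrow> 'a" where
  "vandermonde n x = (\<Prod>i<n. \<Prod>j\<in>{i<..<n}. x i - x j)"

lemma vandermonde_cong: "(\<And>i. i < n \<Longrightarrow> x i = y i) \<Longrightarrow> vandermonde n x = vandermonde n y"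
  unfolding vandermonde_def by (intro prod.cong refl) auto

lemma vandermonde_Suc: "vandermonde (Suc n) x = vandermonde n x * (\<Prod>i<n. x i - x n)"
proof -
  have "(\<Prod>j\<in>{i<..<Suc n}. x i - x j) = (\<Prod>j\<in>{i<..<n}. x i - x j) * (x i - x n)" if "i < n" for i
  proof -
    have "{i<..<Suc n} = insert n {i<..<n}" using that by auto
    then show ?thesis by (simp add: mult.commute)
  qed
  moreover have "{n<..<Suc n} = {}" by auto
  ultimately show ?thesis
    unfolding vandermonde_def by (simp add: lessThan_Suc prod.distrib)
qed

lemma vandermonde_Suc_esym:
  "vandermonde (Suc n) x =
    (\<Sum>j\<le>n. (-1) ^ (n - j) * (esym j {..<n} x * vandermonde n x) * x n ^ (n - j))"
proof -
  have "(\<Prod>i<n. x i - x n) = (\<Sum>j\<le>n. esym j {..<n} x * (- x n) ^ (n - j))"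
    using prod_add_const_esym[of "{..<n}" "- x n" x] by simp
  then show ?thesis
    by (simp add: vandermonde_Suc sum_distrib_left power_minus' mult_ac)
qed

lemma vandermonde_eq_0_iff:
  fixes x :: "nat \<Rightarrow> 'a::idom"
  shows "vandermonde n x = 0 \<longleftrightarrow> \<not> inj_on x {..<n}"
proof
  assume "vandermonde n x = 0"
  then obtain i j where "i < j" "j < n" "x i = x j"
    by (auto simp: vandermonde_def)
  then show "\<not> inj_on x {..<n}"
    by (auto simp: inj_on_def dest: bspec[of _ _ i])
next
  assume "\<not> inj_on x {..<n}"
  then obtain i j where "i < n" "j < n" "i \<noteq> j" "x i = x j"
    by (auto simp: inj_on_def)
  then obtain a b where "a < b" "b < n" "x a = x b"
    by (metis linorder_neqE_nat)
  then have "(\<Prod>j\<in>{a<..<n}. x a - x j) = 0"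
    by (intro prod_zero) auto
  then show "vandermonde n x = 0"
    unfolding vandermonde_def using \<open>a < b\<close> \<open>b < n\<close> by (intro prod_zero) auto
qed

lemma vandermonde_delete:
  "a \<le> n \<Longrightarrow> (-1) ^ a * vandermonde n (\<lambda>i. x (insert_index a i)) * (\<Prod>j\<in>{..<Suc n} - {a}. x a - x j)
     = vandermonde (Suc n) x"
proof (induction n arbitrary: a)
  case 0
  then show ?case by (simp add: vandermonde_def)
next
  case (Suc n)
  show ?case
  proof (cases "a = Suc n")
    case True
    have "vandermonde (Suc n) (\<lambda>i. x (insert_index a i)) = vandermonde (Suc n) x"
      using True by (intro vandermonde_cong) simp
    moreover have "{..<Suc (Suc n)} - {a} = {..<Suc n}"
      using True by auto
    moreover have "(-1) ^ Suc n * (\<Prod>j<Suc n. x (Suc n) - x j) = (\<Prod>j<Suc n. x j - x (Suc n))"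
    proof -
      have "(\<Prod>j<Suc n. x j - x (Suc n)) = (\<Prod>j<Suc n. (-1) * (x (Suc n) - x j))"
        by simp
      then show ?thesis
        by (simp only: prod.distrib prod_constant card_lessThan)
    qed
    ultimately show ?thesis
      using True by (simp only: vandermonde_Suc[of "Suc n" x] mult_ac)
  next
    case False
    with Suc.prems have a: "a \<le> n" by simp
    have "(\<Prod>i<n. x (insert_index a i) - x (Suc n)) = (\<Prod>j\<in>{..<Suc n} - {a}. x j - x (Suc n))"
      by (rule prod_insert_index[OF a])
    then have V: "vandermonde (Suc n) (\<lambda>i. x (insert_index a i))
        = vandermonde n (\<lambda>i. x (insert_index a i)) * (\<Prod>j\<in>{..<Suc n} - {a}. x j - x (Suc n))"
      using a by (simp add: vandermonde_Suc)
    have "{..<Suc (Suc n)} - {a} = insert (Suc n) ({..<Suc n} - {a})"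
      using a by auto
    then have P: "(\<Prod>j\<in>{..<Suc (Suc n)} - {a}. x a - x j)
        = (x a - x (Suc n)) * (\<Prod>j\<in>{..<Suc n} - {a}. x a - x j)"
      by simp
    have "{..<Suc n} = insert a ({..<Suc n} - {a})"
      using a by auto
    then have Q: "(\<Prod>j<Suc n. x j - x (Suc n)) = (x a - x (Suc n)) * (\<Prod>j\<in>{..<Suc n} - {a}. x j - x (Suc n))"
      by (metis Diff_iff finite_Diff finite_lessThan insertCI prod.insert)
    show ?thesis
      unfolding V P vandermonde_Suc[of "Suc n" x] Q Suc.IH[OF a, symmetric]
      by (simp only: mult_ac)
  qed
qed

definition alternant :: "nat \<Rightarrow> (nat \<Rightarrow> nat) \<Rightarrow> (nat \<Rightarrow> 'a::comm_ring_1) \<Rightarrow> 'a mat" where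
  "alternant n e x = mat n n (\<lambda>(j, a). x a ^ e j)"

lemma alternant_carrier [simp]: "alternant n e x \<in> carrier_mat n n"
  unfolding alternant_def by simp

lemma alternant_cong:
  "(\<And>a. a < n \<Longrightarrow> x a = y a) \<Longrightarrow> (\<And>j. j < n \<Longrightarrow> e j = f j) \<Longrightarrow> alternant n e x = alternant n f y"
  unfolding alternant_def by (intro eq_matI) auto

lemma alternant_index [simp]: "j < n \<Longrightarrow> a < n \<Longrightarrow> alternant n e x $$ (j, a) = x a ^ e j"
  unfolding alternant_def by simp

lemma mat_delete_alternant:
  "mat_delete (alternant (Suc n) e x) i c = alternant n (\<lambda>j. e (insert_index i j)) (\<lambda>a. x (insert_index c a))"
  unfolding mat_delete_def alternant_def insert_index_def by (intro eq_matI) auto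

lemma det_alternant_sum_permutes:
  "det (alternant n e x) = (\<Sum>w | w permutes {..<n}. of_int (sign w) * (\<Prod>j<n. x (w j) ^ e j))"
  unfolding det_def'[OF alternant_carrier] atLeast0LessThan
proof (intro sum.cong refl)
  fix w assume "w \<in> {w. w permutes {..<n}}"
  then have "w j < n" if "j < n" for j
    using that permutes_in_image[of w "{..<n}" j] by simp
  then show "signof w * (\<Prod>j<n. alternant n e x $$ (j, w j)) = of_int (sign w) * (\<Prod>j<n. x (w j) ^ e j)"
    by (simp add: alternant_def)
qed

lemma det_alternant_eq_0_if_cols:
  assumes "i < n" "c < n" "i \<noteq> c" "x i = x c"
  shows "det (alternant n e x) = 0"
  by (rule det_identical_columns[OF alternant_carrier assms(3,1,2)])
     (use assms in \<open>auto simp: alternant_def col_def\<close>)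

lemma det_alternant_eq_0_if_rows:
  assumes "i < n" "c < n" "i \<noteq> c" "e i = e c"
  shows "det (alternant n e x) = 0"
  by (rule det_identical_rows[OF alternant_carrier assms(3,1,2)])
     (use assms in \<open>auto simp: alternant_def row_def\<close>)

definition gap_exponents :: "nat \<Rightarrow> nat \<Rightarrow> nat \<Rightarrow> nat" where
  "gap_exponents n m j = (if j < m then n - j else n - 1 - j)"

lemma det_alternant_Suc_expand_last:
  "det (alternant (Suc n) (\<lambda>j. n - j) x) =
    (\<Sum>j\<le>n. (-1) ^ (n - j) * det (alternant n (gap_exponents n j) x) * x n ^ (n - j))"
proof -
  have "det (alternant (Suc n) (\<lambda>j. n - j) x) = (\<Sum>j<Suc n. x n ^ (n - j) * ((-1) ^ (j + n) *
      det (alternant n (\<lambda>j'. n - insert_index j j') (\<lambda>a. x (insert_index n a)))))"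
    unfolding laplace_expansion_column[OF alternant_carrier lessI] cofactor_def mat_delete_alternant
    by (intro sum.cong refl) simp
  also have "\<dots> = (\<Sum>j\<le>n. (-1) ^ (n - j) * det (alternant n (gap_exponents n j) x) * x n ^ (n - j))"
    unfolding lessThan_Suc_atMost
  proof (intro sum.cong refl)
    fix j assume "j \<in> {..n}"
    then have "even (j + n) \<longleftrightarrow> even (n - j)" by auto
    then have "(-1::'a) ^ (j + n) = (-1) ^ (n - j)" by (simp add: minus_one_power_iff)
    moreover have "alternant n (\<lambda>j'. n - insert_index j j') (\<lambda>a. x (insert_index n a)) = alternant n (gap_exponents n j) x"
      by (rule alternant_cong) (auto simp: insert_index_def gap_exponents_def)
    ultimately show "x n ^ (n - j) * ((-1) ^ (j + n) * det (alternant n (\<lambda>j'. n - insert_index j j') (\<lambda>a. x (insert_index n a))))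
      = (-1) ^ (n - j) * det (alternant n (gap_exponents n j) x) * x n ^ (n - j)"
      by simp
  qed
  finally show ?thesis .
qed

lemma polyfun_eq_0_if_distinct_roots:
  fixes c :: "nat \<Rightarrow> 'a::{idom,real_normed_div_algebra}"
  assumes inj: "inj_on z {..<n}" and roots: "\<And>i. i < n \<Longrightarrow> (\<Sum>r<n. c r * z i ^ r) = 0"
    and "r < n"
  shows "c r = 0"
proof (rule ccontr)
  assume c: "c r \<noteq> 0"
  from \<open>r < n\<close> obtain n' where n: "n = Suc n'" by (cases n) auto
  with \<open>r < n\<close> have r: "r \<le> n'" by simp
  have "z ` {..<n} \<subseteq> {y. (\<Sum>i\<le>n'. c i * y ^ i) = 0}"
    using roots by (auto simp: n lessThan_Suc_atMost)
  with polyfun_roots_finite[of c r n', OF c r] have "card (z ` {..<n}) \<le> card {y. (\<Sum>i\<le>n'. c i * y ^ i) = 0}"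
    by (rule card_mono)
  also have "\<dots> \<le> n'"
    by (rule polyfun_roots_card[of c r n', OF c r])
  finally show False
    using card_image[OF inj] n by simp
qed

lemma det_gap_alternant_if_vandermonde:
  fixes x :: "nat \<Rightarrow> 'a::{idom,real_normed_div_algebra}"
  assumes vandermonde_n: "\<And>y :: nat \<Rightarrow> 'a. det (alternant n (\<lambda>j. n - 1 - j) y) = vandermonde n y"
    and "m \<le> n"
  shows "det (alternant n (gap_exponents n m) x) = esym m {..<n} x * vandermonde n x"
proof (cases "inj_on x {..<n}")
  case False
  then obtain i c where "i < n" "c < n" "i \<noteq> c" "x i = x c"
    by (auto simp: inj_on_def)
  with False show ?thesis
    by (simp add: det_alternant_eq_0_if_cols vandermonde_eq_0_iff)
next
  case inj: True
  define d where "d j = (-1) ^ (n - j) *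
    (det (alternant n (gap_exponents n j) x) - esym j {..<n} x * vandermonde n x)" for j
  have gap_0: "gap_exponents n 0 = (\<lambda>j. n - 1 - j)"
    by (auto simp: gap_exponents_def)
  have d_0: "d 0 = 0"
    unfolding d_def gap_0 vandermonde_n esym_0[OF finite_lessThan] by simp
  have expand: "det (alternant (Suc n) (\<lambda>j. n - j) (x(n := y))) - vandermonde (Suc n) (x(n := y))
      = (\<Sum>j\<le>n. d j * y ^ (n - j))" for y
  proof -
    have "alternant n (gap_exponents n j) (x(n := y)) = alternant n (gap_exponents n j) x" for j
      by (rule alternant_cong) auto
    moreover have "vandermonde n (x(n := y)) = vandermonde n x"
      by (rule vandermonde_cong) auto
    moreover have "esym j {..<n} (x(n := y)) = esym j {..<n} x" for j
      by (rule esym_cong) auto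
    ultimately show ?thesis
      unfolding det_alternant_Suc_expand_last vandermonde_Suc_esym d_def sum_subtractf[symmetric]
      by (intro sum.cong refl) (simp add: algebra_simps)
  qed
  have reverse: "(\<Sum>j\<le>n. d j * y ^ (n - j)) = (\<Sum>r<n. d (n - r) * y ^ r)" for y
  proof -
    have "(\<Sum>j\<le>n. d j * y ^ (n - j)) = (\<Sum>r\<le>n. d (n - r) * y ^ r)"
      by (rule sum.reindex_bij_witness[of _ "\<lambda>r. n - r" "\<lambda>j. n - j"]) auto
    then show ?thesis
      using d_0 by (simp add: lessThan_Suc_atMost[symmetric])
  qed
  have roots: "(\<Sum>r<n. d (n - r) * x i ^ r) = 0" if "i < n" for i
  proof -
    have "\<not> inj_on (x(n := x i)) {..<Suc n}"
    proof
      assume "inj_on (x(n := x i)) {..<Suc n}"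
      from inj_onD[OF this, of i n] that show False by simp
    qed
    then have "vandermonde (Suc n) (x(n := x i)) = 0"
      by (simp add: vandermonde_eq_0_iff)
    moreover have "det (alternant (Suc n) (\<lambda>j. n - j) (x(n := x i))) = 0"
      using that by (intro det_alternant_eq_0_if_cols[where i = i and c = n]) auto
    ultimately show ?thesis
      using expand[of "x i"] reverse[of "x i"] by simp
  qed
  have coeffs_0: "d (n - r) = 0" if "r < n" for r
    using polyfun_eq_0_if_distinct_roots[OF inj roots that] .
  have "d m = 0"
  proof (cases "m = 0")
    case False
    with \<open>m \<le> n\<close> have "n - m < n" "n - (n - m) = m" by auto
    with coeffs_0 show ?thesis by metis
  qed (simp add: d_0)
  then show ?thesis
    by (simp add: d_def)
qed

lemma det_alternant_vandermonde:
  fixes x :: "nat \<Rightarrow> 'a::{idom,real_normed_div_algebra}"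
  shows "det (alternant n (\<lambda>j. n - 1 - j) x) = vandermonde n x"
proof (induction n arbitrary: x)
  case 0
  show ?case
    unfolding det_def'[OF alternant_carrier] vandermonde_def by simp
next
  case (Suc n)
  have "det (alternant (Suc n) (\<lambda>j. Suc n - 1 - j) x)
      = (\<Sum>j\<le>n. (-1) ^ (n - j) * (esym j {..<n} x * vandermonde n x) * x n ^ (n - j))"
    unfolding diff_Suc_1 det_alternant_Suc_expand_last
    by (intro sum.cong refl) (simp add: det_gap_alternant_if_vandermonde[OF Suc.IH])
  also have "\<dots> = vandermonde (Suc n) x"
    by (rule vandermonde_Suc_esym[symmetric])
  finally show ?case .
qed

lemma det_gap_alternant:
  fixes x :: "nat \<Rightarrow> 'a::{idom,real_normed_div_algebra}"
  shows "m \<le> n \<Longrightarrow> det (alternant n (gap_exponents n m) x) = esym m {..<n} x * vandermonde n x"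
  by (rule det_gap_alternant_if_vandermonde[OF det_alternant_vandermonde])

lemma det_alternant_top_gap:
  fixes x :: "nat \<Rightarrow> 'a::{idom,real_normed_div_algebra}"
  assumes "m \<le> n"
  shows "det (alternant (Suc n) (\<lambda>j. if j = 0 then t else gap_exponents n m (j - 1)) x) =
    (\<Sum>a\<le>n. (-1) ^ a * x a ^ t * esym m {..<n} (\<lambda>b. x (insert_index a b))
      * vandermonde n (\<lambda>b. x (insert_index a b)))"
  unfolding laplace_expansion_row[OF alternant_carrier zero_less_Suc] cofactor_def
    mat_delete_alternant lessThan_Suc_atMost
  using assms by (intro sum.cong refl) (simp add: det_gap_alternant)

lemma det_alternant_top_gap_div_vandermonde:
  fixes x :: "nat \<Rightarrow> 'a::{field,real_normed_div_algebra}"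
  assumes inj: "inj_on x {..<Suc n}" and "m \<le> n"
  shows "det (alternant (Suc n) (\<lambda>j. if j = 0 then t else gap_exponents n m (j - 1)) x)
      / vandermonde (Suc n) x
    = (\<Sum>a\<le>n. x a ^ t * esym m {..<n} (\<lambda>b. x (insert_index a b))
      / (\<Prod>j\<in>{..<Suc n} - {a}. x a - x j))"
proof -
  have "(-1) ^ a * x a ^ t * E * vandermonde n (\<lambda>b. x (insert_index a b)) / vandermonde (Suc n) x
      = x a ^ t * E / (\<Prod>j\<in>{..<Suc n} - {a}. x a - x j)" if "a \<le> n" for a E
  proof -
    have delete: "(-1) ^ a * vandermonde n (\<lambda>b. x (insert_index a b)) * (\<Prod>j\<in>{..<Suc n} - {a}. x a - x j)
        = vandermonde (Suc n) x"
      using that by (rule vandermonde_delete)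
    moreover have "vandermonde (Suc n) x \<noteq> 0"
      using inj by (simp add: vandermonde_eq_0_iff)
    ultimately show ?thesis
      unfolding delete[symmetric] by (simp add: field_simps)
  qed
  then show ?thesis
    unfolding det_alternant_top_gap[OF \<open>m \<le> n\<close>] sum_divide_distrib
    by (intro sum.cong refl) simp
qed

lemma ChL_hook_eq_sum:
  assumes inj: "inj_on x {..<Suc n}" and "m \<le> n" "1 \<le> k"
  shows "ChL_hook (Suc n) k (Suc m) x =
    (\<Sum>a\<le>n. x a ^ (k + n - m) * esym m {..<n} (\<lambda>b. x (insert_index a b))
      / (\<Prod>j\<in>{..<Suc n} - {a}. x a - x j))"
proof -
  define e where "e j = (if j = 0 then k + n - m else gap_exponents n m (j - 1))" for j
  have "ChL_hook (Suc n) k (Suc m) x = det (alternant (Suc n) e x) / vandermonde (Suc n) x"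
  proof (cases "m < k")
    case True
    have "alternant (Suc n) (\<lambda>j. hook_weight k (Suc m) j + (Suc n - 1 - j)) x = alternant (Suc n) e x"
      using True by (intro alternant_cong) (auto simp: e_def hook_weight_def gap_exponents_def)
    moreover have "weyl_char (Suc n) (hook_weight k (Suc m)) x =
        det (alternant (Suc n) (\<lambda>j. hook_weight k (Suc m) j + (Suc n - 1 - j)) x) / vandermonde (Suc n) x"
      by (simp only: weyl_char_def det_alternant_sum_permutes vandermonde_def)
    ultimately show ?thesis
      using True by (simp add: ChL_hook_def)
  next
    case False
    then have "e 0 = e (m - k + 1)"
      using \<open>1 \<le> k\<close> by (simp add: e_def gap_exponents_def)
    then have "det (alternant (Suc n) e x) = 0"
      using False \<open>m \<le> n\<close> \<open>1 \<le> k\<close> by (intro det_alternant_eq_0_if_rows[where i = 0 and c = "m - k + 1"]) auto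
    with False show ?thesis
      by (simp add: ChL_hook_def)
  qed
  also have "\<dots> = (\<Sum>a\<le>n. x a ^ (k + n - m) * esym m {..<n} (\<lambda>b. x (insert_index a b))
      / (\<Prod>j\<in>{..<Suc n} - {a}. x a - x j))"
    unfolding e_def by (rule det_alternant_top_gap_div_vandermonde[OF inj \<open>m \<le> n\<close>])
  finally show ?thesis .
qed

theorem lemma3p3:
  fixes n k :: nat and q :: complex and x :: "nat \<Rightarrow> complex"
  assumes "n \<ge> 2" and "k \<ge> 1" and "q \<noteq> 0"
    and "inj_on x {..<n}"
  shows "(\<Sum>i=1..n. (-1) ^ (i - 1) * q powi (int n - 2 * int i + 1) * ChL_hook n k i x)
         = Ch_nk n k q x"
proof -
  obtain n' where n: "n = Suc n'"
    using assms(1) by (cases n) auto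
  define y where "y a = (\<lambda>b. x (insert_index a b))" for a
  define P where "P a = (\<Prod>j\<in>{..<n} - {a}. x a - x j)" for a
  have "(\<Sum>i=1..n. (-1) ^ (i - 1) * q powi (int n - 2 * int i + 1) * ChL_hook n k i x)
      = (\<Sum>m\<le>n'. (-1) ^ m * q powi (int n' - 2 * int m) * ChL_hook n k (Suc m) x)"
    unfolding One_nat_def sum.atLeast1_atMost_eq n lessThan_Suc_atMost
    by (intro sum.cong refl) simp
  also have "\<dots> = (\<Sum>m\<le>n'. \<Sum>a\<le>n'.
      (-1) ^ m * q powi (int n' - 2 * int m) * (x a ^ (k + n' - m) * esym m {..<n'} (y a) / P a))"
    using ChL_hook_eq_sum[of x n'] assms(2,4) by (simp add: n y_def P_def sum_distrib_left)
  also have "\<dots> = (\<Sum>a\<le>n'. x a ^ k / P a *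
      (\<Sum>m\<le>n'. (-1) ^ m * q powi (int n' - 2 * int m) * x a ^ (n' - m) * esym m {..<n'} (y a)))"
    by (subst sum.swap) (auto simp: sum_distrib_left power_add[symmetric] intro!: sum.cong)
  also have "\<dots> = (\<Sum>a\<le>n'. x a ^ k / P a * (\<Prod>j\<in>{..<n} - {a}. q * x a - inverse q * x j))"
    using assms(3) by (intro sum.cong refl) (simp add: n y_def prod_q_diff_delete_eq_sum_esym)
  also have "\<dots> = Ch_nk n k q x"
    unfolding Ch_nk_def P_def n lessThan_Suc_atMost by (intro sum.cong refl) (simp add: prod_dividef)
  finally show ?thesis .
qed

end
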